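(* For every $T>0$ there exist $\epsilon=\epsilon(T)>0$ and $c=c(T)>0$ such that for every dyadic $N\in2^{\mathbb N}$, $$\big|\{(t,x)\in[0,T]\times\mathbb T:\ |e^{it\Delta}\delta_N(x)|\ge\epsilon\sqrt N\}\big|\ge c,$$ where $|\cdot|$ is Lebesgue measure on $[0,T]\times\mathbb T$.
   Context: $\mathbb T=\mathbb R/2\pi\mathbb Z$; $e^{it\Delta}$ is the Fourier multiplier $e^{-itn^2}$ on $\mathbb T$. Fix a smooth even $\varphi:\mathbb R\to[0,\infty)$ with $\varphi=1$ on $[-1,1]$ and support in $[-\frac{11}{10},\frac{11}{10}]$; $\delta_N$ is the function on $\mathbb T$ with Fourier coefficients $\hat\delta_N(n)=\varphi(n/N)$, i.e. $\delta_N(x)=\frac1{2\pi}\sum_{n\in\mathbb Z}\varphi(n/N)e^{inx}$. *)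

theory Defs
  imports "HOL-Analysis.Analysis"
begin

definition smooth_real :: "(real \<Rightarrow> real) \<Rightarrow> bool" where
  "smooth_real f \<longleftrightarrow> (\<forall>k x. ((deriv ^^ k) f) differentiable (at x))"

definition admissible_cutoff :: "(real \<Rightarrow> real) \<Rightarrow> bool" where
  "admissible_cutoff \<phi> \<longleftrightarrow> smooth_real \<phi> \<and> (\<forall>x. \<phi> (-x) = \<phi> x) \<and> (\<forall>x. 0 \<le> \<phi> x)
     \<and> (\<forall>x. \<bar>x\<bar> \<le> 1 \<longrightarrow> \<phi> x = 1) \<and> (\<forall>x. \<bar>x\<bar> > 11/10 \<longrightarrow> \<phi> x = 0)"

text \<open>Free Schroedinger evolution of delta_N on the torus (parametrized by x in R, 2pi-periodic):
  e^{it Delta} delta_N (x) = (1/2pi) sum_n phi(n/N) e^{-itn^2} e^{inx}.\<close>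
definition schrod_delta :: "(real \<Rightarrow> real) \<Rightarrow> real \<Rightarrow> real \<Rightarrow> real \<Rightarrow> complex" where
  "schrod_delta \<phi> N t x =
     complex_of_real (1 / (2 * pi)) *
       (\<Sum>\<^sub>\<infinity> n::int. complex_of_real (\<phi> (of_int n / N)) *
           exp (\<i> * complex_of_real (of_int n * x - t * (of_int n)\<^sup>2)))"

end

theory Submission
  imports Defs
begin

text \<open>
  On the frequency window, e^{it\<Delta>} \<delta>_N is the trigonometric polynomial
  u(t,x) = \<Sum>_n c_n e^{i(nx - n^2 t)} with c_n = \<phi>(n/N) / 2\<pi>.
  Orthogonality of the characters in x gives |u|_{L^2}^2 = 2\<pi> T \<Sum> c_n^2 \<ge> T N / 2\<pi> on
  [0,T] \<times> [0,2\<pi>]. Over a full time period [0,2\<pi>M] \<times> [0,2\<pi>], orthogonality in both variables turns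
  |u|_{L^4}^4 into a sum over the solutions of n_1 + n_2 = m_1 + m_2, n_1^2 + n_2^2 = m_1^2 + m_2^2,
  which are only the trivial ones {m_1, m_2} = {n_1, n_2}; hence |u|_{L^4}^4 \<le> 8\<pi>^2 M (\<Sum> c_n^2)^2.
  Once the threshold \<epsilon> \<surd>N is so small that {|u| < \<epsilon> \<surd>N} carries at most half of the L^2 mass,
  the Paley--Zygmund inequality bounds the measure of {|u| \<ge> \<epsilon> \<surd>N} from below by
  |u|_{L^2}^4 / (4 |u|_{L^4}^4) \<ge> T^2 / 8M, uniformly in N.
\<close>

section \<open>Space-time integrals of trigonometric polynomials\<close>

definition wave_sum ::
    "'j set \<Rightarrow> ('j \<Rightarrow> real) \<Rightarrow> ('j \<Rightarrow> int) \<Rightarrow> ('j \<Rightarrow> int) \<Rightarrow> real \<Rightarrow> real \<Rightarrow> complex" where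
  "wave_sum J c k l t x =
     (\<Sum>j\<in>J. of_real (c j) * exp (\<i> * of_real (of_int (k j) * x - of_int (l j) * t)))"

lemma continuous_on_wave_sum: "continuous_on S (\<lambda>p. wave_sum J c k l (fst p) (snd p))"
  unfolding wave_sum_def by (intro continuous_intros)

lemma wave_sum_mult:
  "wave_sum J c k l t x * wave_sum J' c' k' l' t x =
     wave_sum (J \<times> J') (\<lambda>(i, j). c i * c' j) (\<lambda>(i, j). k i + k' j) (\<lambda>(i, j). l i + l' j) t x"
proof -
  have "of_real (c i) * exp (\<i> * of_real (of_int (k i) * x - of_int (l i) * t)) *
      (of_real (c' j) * exp (\<i> * of_real (of_int (k' j) * x - of_int (l' j) * t))) =
    of_real (c i * c' j) * exp (\<i> * of_real (of_int (k i + k' j) * x - of_int (l i + l' j) * t))"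
    for i j
    by (simp add: exp_add[symmetric] algebra_simps)
  then show ?thesis
    unfolding wave_sum_def sum_product sum.cartesian_product
    by (intro sum.cong refl) (simp only: split_beta)
qed

lemma cnj_wave_sum: "cnj (wave_sum J c k l t x) = wave_sum J c (\<lambda>j. - k j) (\<lambda>j. - l j) t x"
  unfolding wave_sum_def by (simp add: cnj_sum exp_cnj algebra_simps)

lemma exp_ix_has_integral:
  fixes k :: int and m :: nat
  shows "((\<lambda>x. exp (\<i> * of_real (of_int k * x))) has_integral
           (if k = 0 then of_real (2 * pi * m) else 0)) {0..2 * pi * m}"
proof (cases "k = 0")
  case True
  then show ?thesis
    using has_integral_const_real[of "1::complex" 0 "2 * pi * m"] by (simp add: scaleR_conv_of_real)
next
  case False
  define a where "a = \<i> * of_int k"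
  have "((\<lambda>x. exp (x *\<^sub>R a) * a) has_integral (exp ((2 * pi * m) *\<^sub>R a) - exp (0 *\<^sub>R a)))
      {0..2 * pi * m}"
    by (intro fundamental_theorem_of_calculus) (auto intro: exp_scaleR_has_vector_derivative_right)
  moreover have "exp ((2 * pi * m) *\<^sub>R a) = 1"
  proof -
    have "(2 * pi * m) *\<^sub>R a = (2 * of_int (k * int m) * pi) * \<i>"
      by (simp add: a_def scaleR_conv_of_real algebra_simps)
    then show ?thesis
      using exp_integer_2pi[of "of_int (k * int m)"] by simp
  qed
  ultimately have "((\<lambda>x. exp (x *\<^sub>R a) * a) has_integral 0) {0..2 * pi * m}"
    by simp
  then have "((\<lambda>x. exp (x *\<^sub>R a) * a / a) has_integral 0 / a) {0..2 * pi * m}"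
    by (rule has_integral_divide)
  then show ?thesis
    using False by (simp add: a_def scaleR_conv_of_real mult_ac)
qed

definition phase_integral :: "real \<Rightarrow> int \<Rightarrow> complex" where
  "phase_integral T l = integral {0..T} (\<lambda>t. exp (- \<i> * of_real (of_int l * t)))"

lemma phase_integral_0: "T \<ge> 0 \<Longrightarrow> phase_integral T 0 = of_real T"
  unfolding phase_integral_def by (simp add: scaleR_conv_of_real)

lemma phase_integral_period:
  fixes m :: nat
  assumes "l \<noteq> 0"
  shows "phase_integral (2 * pi * m) l = 0"
proof -
  have "((\<lambda>t. exp (- \<i> * of_real (of_int l * t))) has_integral 0) {0..2 * pi * m}"
    using exp_ix_has_integral[of "- l" m] assms by simp
  then show ?thesis
    unfolding phase_integral_def by (rule integral_unique)
qed

lemma wave_sum_x_has_integral: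
  assumes "finite J"
  shows "((\<lambda>x. wave_sum J c k l t x) has_integral
     of_real (2 * pi) * (\<Sum>j\<in>{j\<in>J. k j = 0}. of_real (c j) * exp (- \<i> * of_real (of_int (l j) * t))))
     {0..2 * pi}"
proof -
  have mode: "((\<lambda>x. of_real (c j) * exp (\<i> * of_real (of_int (k j) * x - of_int (l j) * t))) has_integral
      of_real (c j) * exp (- \<i> * of_real (of_int (l j) * t)) * (if k j = 0 then of_real (2 * pi) else 0))
      {0..2 * pi}" for j
  proof -
    have "((\<lambda>x. exp (\<i> * of_real (of_int (k j) * x))) has_integral
        (if k j = 0 then of_real (2 * pi) else 0)) {0..2 * pi}"
      using exp_ix_has_integral[of "k j" 1] by (simp only: of_nat_1 mult_1_right)
    moreover have "(\<lambda>x. of_real (c j) * exp (\<i> * of_real (of_int (k j) * x - of_int (l j) * t))) =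
        (\<lambda>x. of_real (c j) * exp (- \<i> * of_real (of_int (l j) * t)) * exp (\<i> * of_real (of_int (k j) * x)))"
      by (simp add: exp_add[symmetric] algebra_simps)
    ultimately show ?thesis
      by (simp only: has_integral_mult_right)
  qed
  have "((\<lambda>x. wave_sum J c k l t x) has_integral
      (\<Sum>j\<in>J. of_real (c j) * exp (- \<i> * of_real (of_int (l j) * t)) *
        (if k j = 0 then of_real (2 * pi) else 0)))
      {0..2 * pi}"
    unfolding wave_sum_def by (intro has_integral_sum assms mode)
  moreover have "(\<Sum>j\<in>J. of_real (c j) * exp (- \<i> * of_real (of_int (l j) * t)) *
        (if k j = 0 then of_real (2 * pi) else 0)) =
      of_real (2 * pi) * (\<Sum>j\<in>{j\<in>J. k j = 0}. of_real (c j) * exp (- \<i> * of_real (of_int (l j) * t)))"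
    unfolding sum_distrib_left sum.inter_filter[OF assms] by (intro sum.cong) auto
  ultimately show ?thesis
    by simp
qed

lemma wave_sum_has_integral:
  assumes "finite J"
  shows "((\<lambda>p. wave_sum J c k l (fst p) (snd p)) has_integral
     of_real (2 * pi) * (\<Sum>j\<in>{j\<in>J. k j = 0}. of_real (c j) * phase_integral T (l j)))
     (cbox (0, 0) (T, 2 * pi))"
proof -
  have "integral (cbox (0, 0) (T, 2 * pi)) (\<lambda>p. wave_sum J c k l (fst p) (snd p)) =
      integral {0..T} (\<lambda>t. integral {0..2 * pi} (\<lambda>x. wave_sum J c k l t x))"
    using integral_prod_continuous[OF continuous_on_wave_sum] by (simp add: cbox_interval)
  also have "\<dots> = integral {0..T} (\<lambda>t. of_real (2 * pi) *
      (\<Sum>j\<in>{j\<in>J. k j = 0}. of_real (c j) * exp (- \<i> * of_real (of_int (l j) * t))))"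
    using integral_unique[OF wave_sum_x_has_integral[OF assms]] by simp
  also have "\<dots> = of_real (2 * pi) * (\<Sum>j\<in>{j\<in>J. k j = 0}. of_real (c j) * phase_integral T (l j))"
  proof -
    have "(\<lambda>t. of_real (c j) * exp (- \<i> * of_real (of_int (l j) * t))) integrable_on {0..T}" for j
      by (intro integrable_continuous_interval continuous_intros)
    then show ?thesis
      unfolding phase_integral_def by (simp add: integral_sum assms)
  qed
  finally have box_integral: "integral (cbox (0, 0) (T, 2 * pi)) (\<lambda>p. wave_sum J c k l (fst p) (snd p)) =
      of_real (2 * pi) * (\<Sum>j\<in>{j\<in>J. k j = 0}. of_real (c j) * phase_integral T (l j))" .
  show ?thesis
    unfolding box_integral[symmetric] by (intro integrable_integral integrable_continuous continuous_on_wave_sum)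
qed

lemma norm_wave_sum_power2:
  "of_real ((cmod (wave_sum J c k l t x))\<^sup>2) =
     wave_sum (J \<times> J) (\<lambda>(i, j). c i * c j) (\<lambda>(i, j). k i - k j) (\<lambda>(i, j). l i - l j) t x"
  unfolding complex_norm_square cnj_wave_sum wave_sum_mult by simp

lemma norm_wave_sum_power2_has_integral:
  assumes "finite J" "inj_on k J" "T \<ge> 0"
  shows "((\<lambda>p. (cmod (wave_sum J c k l (fst p) (snd p)))\<^sup>2) has_integral
     2 * pi * T * (\<Sum>j\<in>J. (c j)\<^sup>2)) (cbox (0, 0) (T, 2 * pi))"
proof -
  define C where "C = (\<lambda>(i, j). c i * c j)"
  define K where "K = (\<lambda>(i, j). k i - k j)"
  define L where "L = (\<lambda>(i, j). l i - l j)"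
  have "((\<lambda>p. wave_sum (J \<times> J) C K L (fst p) (snd p)) has_integral
      of_real (2 * pi) * (\<Sum>q\<in>{q \<in> J \<times> J. K q = 0}. of_real (C q) * phase_integral T (L q)))
      (cbox (0, 0) (T, 2 * pi))"
    using assms(1) by (intro wave_sum_has_integral) simp
  moreover have "{q \<in> J \<times> J. K q = 0} = (\<lambda>i. (i, i)) ` J"
  proof (intro equalityI subsetI)
    fix q
    assume "q \<in> {q \<in> J \<times> J. K q = 0}"
    then obtain i j where "q = (i, j)" "i \<in> J" "j \<in> J" "k i = k j"
      by (auto simp: K_def)
    then show "q \<in> (\<lambda>i. (i, i)) ` J"
      using inj_onD[OF assms(2)] by auto
  qed (auto simp: K_def)
  moreover have "(\<Sum>q\<in>(\<lambda>i. (i, i)) ` J. of_real (C q) * phase_integral T (L q)) =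
      (\<Sum>j\<in>J. of_real (c j * c j) * phase_integral T 0)"
    by (simp add: sum.reindex inj_on_def C_def L_def)
  moreover have "\<dots> = of_real (T * (\<Sum>j\<in>J. (c j)\<^sup>2))"
    by (simp add: phase_integral_0 assms(3) sum_distrib_left power2_eq_square mult.commute)
  ultimately have "((\<lambda>p. wave_sum (J \<times> J) C K L (fst p) (snd p)) has_integral
      of_real (2 * pi * T * (\<Sum>j\<in>J. (c j)\<^sup>2))) (cbox (0, 0) (T, 2 * pi))"
    by (simp only: of_real_mult mult.assoc)
  then have "((\<lambda>p. of_real ((cmod (wave_sum J c k l (fst p) (snd p)))\<^sup>2) :: complex) has_integral
      of_real (2 * pi * T * (\<Sum>j\<in>J. (c j)\<^sup>2))) (cbox (0, 0) (T, 2 * pi))"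
    unfolding norm_wave_sum_power2 C_def K_def L_def .
  from has_integral_Re[OF this] show ?thesis
    by simp
qed

section \<open>Resonances of the Schroedinger phase and the \<open>L\<^sup>4\<close> bound\<close>

definition resonant :: "int \<times> int \<Rightarrow> int \<times> int \<Rightarrow> bool" where
  "resonant p q \<longleftrightarrow> fst p + snd p = fst q + snd q \<and> (fst p)\<^sup>2 + (snd p)\<^sup>2 = (fst q)\<^sup>2 + (snd q)\<^sup>2"

lemma resonant_imp_eq_or_swap:
  assumes "resonant p q"
  shows "q = p \<or> q = prod.swap p"
proof -
  obtain a b c d where pq: "p = (a, b)" "q = (c, d)"
    by (cases p, cases q)
  then have sums: "a + b = c + d" "a\<^sup>2 + b\<^sup>2 = c\<^sup>2 + d\<^sup>2"
    using assms by (simp_all add: resonant_def)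
  then have d: "d = a + b - c"
    by simp
  have "(c - a) * (c - b) = 0"
    using sums(2) unfolding d by (simp add: algebra_simps power2_eq_square)
  then show ?thesis
    using d pq by auto
qed

lemma sum_nonneg_le_two_points:
  fixes f :: "'a \<Rightarrow> real"
  assumes "finite J" "\<And>j. 0 \<le> f j" "\<And>j. j \<in> J \<Longrightarrow> j \<noteq> a \<Longrightarrow> j \<noteq> b \<Longrightarrow> f j = 0"
  shows "sum f J \<le> f a + f b"
proof -
  have "sum f J = sum f (J \<inter> {a, b})"
    by (rule sum.mono_neutral_right) (use assms in auto)
  also have "\<dots> \<le> sum f {a, b}"
    by (rule sum_mono2) (use assms(2) in auto)
  also have "\<dots> \<le> f a + f b"
    using assms(2) by (cases "a = b") auto
  finally show ?thesis .
qed

lemma sum_resonant_le: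
  fixes c :: "int \<Rightarrow> real"
  assumes "finite J"
  shows "(\<Sum>p\<in>J \<times> J. \<Sum>q\<in>J \<times> J. if resonant p q
      then c (fst p) * c (snd p) * (c (fst q) * c (snd q)) else 0) \<le> 2 * (\<Sum>n\<in>J. (c n)\<^sup>2)\<^sup>2"
proof -
  define C where "C q = c (fst q) * c (snd q)" for q
  have "(\<Sum>q\<in>J \<times> J. if resonant p q then C p * C q else 0) \<le> 2 * (C p)\<^sup>2" for p
  proof -
    let ?f = "\<lambda>q. if resonant p q then \<bar>C p\<bar> * \<bar>C q\<bar> else 0"
    have "(\<Sum>q\<in>J \<times> J. if resonant p q then C p * C q else 0) \<le> sum ?f (J \<times> J)"
      by (intro sum_mono) (auto simp: abs_mult[symmetric])
    also have "\<dots> \<le> ?f p + ?f (prod.swap p)"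
    proof (rule sum_nonneg_le_two_points)
      show "q \<noteq> p \<Longrightarrow> q \<noteq> prod.swap p \<Longrightarrow> ?f q = 0" for q
        using resonant_imp_eq_or_swap[of p q] by auto
    qed (use assms in auto)
    also have "\<dots> \<le> 2 * (C p)\<^sup>2"
      by (simp add: C_def resonant_def power2_eq_square abs_mult mult_ac add.commute)
    finally show ?thesis .
  qed
  then have "(\<Sum>p\<in>J \<times> J. \<Sum>q\<in>J \<times> J. if resonant p q then C p * C q else 0) \<le>
      (\<Sum>p\<in>J \<times> J. 2 * (C p)\<^sup>2)"
    by (rule sum_mono)
  also have "\<dots> = 2 * (\<Sum>n\<in>J. (c n)\<^sup>2)\<^sup>2"
    by (simp add: C_def power2_eq_square sum_distrib_left sum_product sum.cartesian_product case_prod_beta mult_ac)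
  finally show ?thesis
    unfolding C_def .
qed

definition schrodinger_wave :: "int set \<Rightarrow> (int \<Rightarrow> real) \<Rightarrow> real \<Rightarrow> real \<Rightarrow> complex" where
  "schrodinger_wave J c = wave_sum J c (\<lambda>n. n) (\<lambda>n. n\<^sup>2)"

lemma schrodinger_wave_power2:
  "(schrodinger_wave J c t x)\<^sup>2 =
     wave_sum (J \<times> J) (\<lambda>(i, j). c i * c j) (\<lambda>(i, j). i + j) (\<lambda>(i, j). i\<^sup>2 + j\<^sup>2) t x"
  unfolding schrodinger_wave_def power2_eq_square[of "wave_sum J c _ _ t x"] wave_sum_mult ..

lemma schrodinger_wave_power4_has_integral:
  fixes M :: nat
  assumes "finite J"
  shows "((\<lambda>p. (cmod (schrodinger_wave J c (fst p) (snd p))) ^ 4) has_integral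
      4 * pi\<^sup>2 * M * (\<Sum>p\<in>J \<times> J. \<Sum>q\<in>J \<times> J. if resonant p q
        then c (fst p) * c (snd p) * (c (fst q) * c (snd q)) else 0))
    (cbox (0, 0) (2 * pi * M, 2 * pi))"
proof -
  define P where "P = J \<times> J"
  define C where "C = (\<lambda>(i, j). c i * c j)"
  define K :: "int \<times> int \<Rightarrow> int" where "K = (\<lambda>(i, j). i + j)"
  define L :: "int \<times> int \<Rightarrow> int" where "L = (\<lambda>(i, j). i\<^sup>2 + j\<^sup>2)"
  define R where "R = (\<Sum>p\<in>P. \<Sum>q\<in>P. if resonant p q then C p * C q else 0)"
  have resonant_iff: "resonant p q \<longleftrightarrow> K p = K q \<and> L p = L q" for p q
    by (simp add: resonant_def K_def L_def case_prod_beta)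
  have quartic: "(cmod z) ^ 4 = (cmod (z\<^sup>2))\<^sup>2" for z :: complex
    by (simp add: norm_power flip: power_mult)
  have fin: "finite (P \<times> P)"
    using assms by (simp add: P_def)
  have "((\<lambda>p. wave_sum (P \<times> P) (\<lambda>(p, q). C p * C q) (\<lambda>(p, q). K p - K q) (\<lambda>(p, q). L p - L q)
        (fst p) (snd p)) has_integral of_real (2 * pi) *
      (\<Sum>pq\<in>{pq \<in> P \<times> P. (\<lambda>(p, q). K p - K q) pq = 0}.
        of_real ((\<lambda>(p, q). C p * C q) pq) * phase_integral (2 * pi * M) ((\<lambda>(p, q). L p - L q) pq)))
      (cbox (0, 0) (2 * pi * M, 2 * pi))"
    by (rule wave_sum_has_integral[OF fin])
  also have "(\<Sum>pq\<in>{pq \<in> P \<times> P. (\<lambda>(p, q). K p - K q) pq = 0}.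
        of_real ((\<lambda>(p, q). C p * C q) pq) * phase_integral (2 * pi * M) ((\<lambda>(p, q). L p - L q) pq)) =
      (\<Sum>(p, q)\<in>P \<times> P. of_real (if resonant p q then 2 * pi * M * (C p * C q) else 0))"
    unfolding sum.inter_filter[OF fin]
  proof (intro sum.cong refl)
    fix pq :: "(int \<times> int) \<times> (int \<times> int)"
    obtain p q where pq: "pq = (p, q)"
      by (cases pq)
    show "(if (\<lambda>(p, q). K p - K q) pq = 0
        then of_real ((\<lambda>(p, q). C p * C q) pq) * phase_integral (2 * pi * M) ((\<lambda>(p, q). L p - L q) pq)
        else 0) =
      (\<lambda>(p, q). of_real (if resonant p q then 2 * pi * M * (C p * C q) else 0)) pq"
      unfolding pq resonant_iff
      by (cases "L p = L q") (simp_all add: phase_integral_period phase_integral_0)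
  qed
  also have "\<dots> = of_real (2 * pi * M * R)"
    unfolding R_def sum_distrib_left sum.cartesian_product[symmetric] of_real_sum
    by (intro sum.cong refl) (simp add: case_prod_beta)
  finally have "((\<lambda>p. of_real ((cmod (schrodinger_wave J c (fst p) (snd p))) ^ 4) :: complex) has_integral
      of_real (2 * pi) * of_real (2 * pi * M * R)) (cbox (0, 0) (2 * pi * M, 2 * pi))"
    unfolding quartic schrodinger_wave_power2 norm_wave_sum_power2 P_def C_def K_def L_def .
  from has_integral_Re[OF this] show ?thesis
    unfolding R_def P_def C_def case_prod_beta by (simp add: power2_eq_square mult_ac)
qed

lemma schrodinger_wave_power4_integral_le:
  fixes M :: nat
  assumes "finite J"
  shows "integral (cbox (0, 0) (2 * pi * M, 2 * pi))
      (\<lambda>p. (cmod (schrodinger_wave J c (fst p) (snd p))) ^ 4) \<le> 8 * pi\<^sup>2 * M * (\<Sum>n\<in>J. (c n)\<^sup>2)\<^sup>2"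
proof -
  have "4 * pi\<^sup>2 * M * (\<Sum>p\<in>J \<times> J. \<Sum>q\<in>J \<times> J. if resonant p q
      then c (fst p) * c (snd p) * (c (fst q) * c (snd q)) else 0) \<le>
    4 * pi\<^sup>2 * M * (2 * (\<Sum>n\<in>J. (c n)\<^sup>2)\<^sup>2)"
    by (intro mult_left_mono sum_resonant_le assms) simp
  then show ?thesis
    using integral_unique[OF schrodinger_wave_power4_has_integral[OF assms]] by simp
qed

section \<open>The frequency window of \<open>\<delta>\<^sub>N\<close>\<close>

definition freq_window :: "real \<Rightarrow> int set" where
  "freq_window N = {-\<lfloor>2 * N\<rfloor>..\<lfloor>2 * N\<rfloor>}"

lemma admissible_cutoff_vanishes_outside_window:
  assumes "admissible_cutoff \<phi>" "N > 0" "n \<notin> freq_window N"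
  shows "\<phi> (of_int n / N) = 0"
proof -
  have "2 * N < \<bar>of_int n\<bar>"
    using assms(3) unfolding freq_window_def by (auto simp: abs_if) linarith+
  then have "11 / 10 < \<bar>of_int n / N\<bar>"
    using assms(2) by (simp add: abs_divide pos_less_divide_eq)
  then show ?thesis
    using assms(1) by (simp add: admissible_cutoff_def)
qed

lemma schrod_delta_eq_schrodinger_wave:
  assumes "admissible_cutoff \<phi>" "N > 0"
  shows "schrod_delta \<phi> N t x = schrodinger_wave (freq_window N) (\<lambda>n. \<phi> (of_int n / N) / (2 * pi)) t x"
proof -
  let ?a = "\<lambda>n::int. of_real (\<phi> (of_int n / N)) * exp (\<i> * of_real (of_int n * x - t * (of_int n)\<^sup>2))"
  have "infsum ?a UNIV = sum ?a (freq_window N)"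
    using admissible_cutoff_vanishes_outside_window[OF assms]
    by (subst infsum_cong_neutral[where T = "freq_window N" and g = ?a]) (auto simp: freq_window_def)
  then show ?thesis
    unfolding schrod_delta_def schrodinger_wave_def wave_sum_def
    by (simp add: mult_ac sum_divide_distrib)
qed

lemma admissible_cutoff_energy_ge:
  assumes "admissible_cutoff \<phi>" "N > 0"
  shows "N \<le> (\<Sum>n\<in>freq_window N. (\<phi> (of_int n / N))\<^sup>2)"
proof -
  have one: "\<phi> (of_int n / N) = 1" if "n \<in> {0..\<lfloor>N\<rfloor>}" for n
  proof -
    have "\<bar>of_int n / N\<bar> \<le> 1"
      using that assms(2) by (auto simp: abs_divide divide_le_eq_1 le_floor_iff)
    then show ?thesis
      using assms(1) by (simp add: admissible_cutoff_def)
  qed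
  have "N \<le> of_int (\<lfloor>N\<rfloor> + 1)"
    by linarith
  also have "\<dots> = (\<Sum>n\<in>{0..\<lfloor>N\<rfloor>}. (\<phi> (of_int n / N))\<^sup>2)"
    using assms(2) by (simp add: one)
  also have "\<dots> \<le> (\<Sum>n\<in>freq_window N. (\<phi> (of_int n / N))\<^sup>2)"
    using assms(2) by (intro sum_mono2) (auto simp: freq_window_def, linarith+)
  finally show ?thesis .
qed

section \<open>The Paley--Zygmund inequality and the main estimate\<close>

lemma square_le_indicator_plus_power4:
  fixes y s \<sigma> :: real
  assumes "0 \<le> y" "0 < \<sigma>"
  shows "y\<^sup>2 \<le> s\<^sup>2 + \<sigma> / 2 * (if s \<le> y then 1 else 0) + y ^ 4 / (2 * \<sigma>)"
proof (cases "s \<le> y")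
  case True
  have "0 \<le> (y\<^sup>2 - \<sigma>)\<^sup>2"
    by simp
  then have "y\<^sup>2 \<le> \<sigma> / 2 + y ^ 4 / (2 * \<sigma>)"
    using assms(2) by (simp add: field_simps power2_eq_square power4_eq_xxxx algebra_simps)
  then show ?thesis
    using True zero_le_power2[of s] by (simp; linarith)
next
  case False
  then have "y\<^sup>2 \<le> s\<^sup>2"
    using assms(1) by (intro power_mono) auto
  moreover have "0 \<le> y ^ 4 / (2 * \<sigma>)"
    using assms by simp
  ultimately show ?thesis
    using False by simp
qed

lemma emeasure_superlevel_ge_paley_zygmund:
  fixes g :: "'a::euclidean_space \<Rightarrow> real"
  assumes S: "S \<in> sets borel" "emeasure lborel S < \<infinity>"
    and g: "g \<in> borel_measurable borel" "\<And>p. p \<in> S \<Longrightarrow> 0 \<le> g p"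
    and I: "((\<lambda>p. (g p)\<^sup>2) has_integral I) S" "0 < I"
    and Q: "(\<lambda>p. g p ^ 4) integrable_on S" "integral S (\<lambda>p. g p ^ 4) \<le> Q" "0 < Q"
    and s: "measure lborel S * s\<^sup>2 \<le> I / 2"
  shows "ennreal (I\<^sup>2 / (4 * Q)) \<le> emeasure lborel {p \<in> S. s \<le> g p}"
proof -
  define E where "E = {p \<in> S. s \<le> g p}"
  \<comment> \<open>the weight that balances the two error terms of the pointwise majorant\<close>
  define \<sigma> where "\<sigma> = 2 * Q / I"
  have "\<sigma> > 0"
    using Q(3) I(2) by (simp add: \<sigma>_def)
  have E_sets: "E \<in> sets borel"
    unfolding E_def using S(1) g(1) by measurable
  have "E \<subseteq> S"
    by (auto simp: E_def)
  then have "emeasure lborel E \<le> emeasure lborel S"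
    using S(1) by (intro emeasure_mono) simp_all
  then have E_finite: "emeasure lborel E < \<infinity>"
    using S(2) by (rule le_less_trans)
  have "((\<lambda>p. if p \<in> E then 1 else 0) has_integral measure lborel E) S"
    using has_integral_measure_lborel[OF E_sets E_finite] has_integral_restrict[OF \<open>E \<subseteq> S\<close>, of "\<lambda>_. 1::real"]
    by simp
  moreover have "((\<lambda>p. 1) has_integral measure lborel S) S"
    using has_integral_measure_lborel[OF S] .
  ultimately have majorant: "((\<lambda>p. s\<^sup>2 + \<sigma> / 2 * (if p \<in> E then 1 else 0) + g p ^ 4 / (2 * \<sigma>)) has_integral
      measure lborel S * s\<^sup>2 + \<sigma> / 2 * measure lborel E + integral S (\<lambda>p. g p ^ 4) / (2 * \<sigma>)) S"
    using Q(1)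
    by (intro has_integral_add has_integral_mult_right has_integral_divide integrable_integral)
      (auto dest: has_integral_mult_left[where c = "s\<^sup>2"])
  have "(g p)\<^sup>2 \<le> s\<^sup>2 + \<sigma> / 2 * (if p \<in> E then 1 else 0) + g p ^ 4 / (2 * \<sigma>)" if "p \<in> S" for p
    using square_le_indicator_plus_power4[OF g(2)[OF that] \<open>\<sigma> > 0\<close>, of s] that by (simp add: E_def)
  with I(1) majorant have
    "I \<le> measure lborel S * s\<^sup>2 + \<sigma> / 2 * measure lborel E + integral S (\<lambda>p. g p ^ 4) / (2 * \<sigma>)"
    by (rule has_integral_le)
  also have "\<dots> \<le> I / 2 + \<sigma> / 2 * measure lborel E + Q / (2 * \<sigma>)"
    using \<open>\<sigma> > 0\<close> by (intro add_mono order_refl s divide_right_mono Q(2)) simp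
  also have "Q / (2 * \<sigma>) = I / 4"
    using I(2) Q(3) by (simp add: \<sigma>_def)
  finally have "I / 4 \<le> \<sigma> / 2 * measure lborel E"
    by linarith
  then have "I * (I / 4) \<le> I * (\<sigma> / 2 * measure lborel E)"
    using I(2) by (intro mult_left_mono) auto
  also have "\<dots> = Q * measure lborel E"
    using I(2) by (simp add: \<sigma>_def)
  finally have "I\<^sup>2 \<le> measure lborel E * (4 * Q)"
    by (simp add: power2_eq_square mult_ac)
  then show ?thesis
    using E_finite Q(3)
    by (simp add: E_def emeasure_eq_ennreal_measure ennreal_leI pos_divide_le_eq)
qed

lemma schrodinger_wave_superlevel_emeasure_ge:
  fixes J :: "int set" and M :: nat
  assumes "finite J" "0 < T" "T \<le> 2 * pi * M"
    and "0 < (\<Sum>n\<in>J. (c n)\<^sup>2)" "s\<^sup>2 \<le> (\<Sum>n\<in>J. (c n)\<^sup>2) / 2"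
  shows "ennreal (T\<^sup>2 / (8 * M)) \<le>
    emeasure lborel {p \<in> cbox (0, 0) (T, 2 * pi). s \<le> cmod (schrodinger_wave J c (fst p) (snd p))}"
proof -
  define S2 where "S2 = (\<Sum>n\<in>J. (c n)\<^sup>2)"
  define B where "B = cbox (0::real, 0::real) (T, 2 * pi)"
  define g where "g p = cmod (schrodinger_wave J c (fst p) (snd p))" for p
  have g_cont: "continuous_on UNIV g"
    unfolding g_def schrodinger_wave_def by (intro continuous_on_norm continuous_on_wave_sum)
  have int4: "(\<lambda>p. g p ^ 4) integrable_on cbox a b" for a b
    using g_cont by (intro integrable_continuous continuous_intros) (auto intro: continuous_on_subset)
  have "integral B (\<lambda>p. g p ^ 4) \<le> integral (cbox (0, 0) (2 * pi * M, 2 * pi)) (\<lambda>p. g p ^ 4)"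
    using assms(3) unfolding B_def
    by (intro integral_subset_le int4) (auto simp: cbox_Pair_eq)
  also have "\<dots> \<le> 8 * pi\<^sup>2 * M * S2\<^sup>2"
    unfolding g_def S2_def by (rule schrodinger_wave_power4_integral_le[OF assms(1)])
  finally have L4: "integral B (\<lambda>p. g p ^ 4) \<le> 8 * pi\<^sup>2 * M * S2\<^sup>2" .
  have "ennreal ((2 * pi * T * S2)\<^sup>2 / (4 * (8 * pi\<^sup>2 * M * S2\<^sup>2))) \<le> emeasure lborel {p \<in> B. s \<le> g p}"
  proof (rule emeasure_superlevel_ge_paley_zygmund)
    show "B \<in> sets borel"
      unfolding B_def by simp
    show "emeasure lborel B < \<infinity>"
      unfolding B_def by (rule emeasure_lborel_cbox_finite)
    show "g \<in> borel_measurable borel"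
      by (rule borel_measurable_continuous_onI[OF g_cont])
    show "((\<lambda>p. (g p)\<^sup>2) has_integral 2 * pi * T * S2) B"
      unfolding g_def schrodinger_wave_def B_def S2_def
      using assms(1,2) by (intro norm_wave_sum_power2_has_integral) simp_all
    show "0 < 2 * pi * T * S2"
      using assms(2,4) by (simp add: S2_def)
    have "0 < M"
      using assms(2,3) by (intro Nat.gr0I) simp
    then show "0 < 8 * pi\<^sup>2 * M * S2\<^sup>2"
      using assms(4) by (simp add: S2_def)
    show "measure lborel B * s\<^sup>2 \<le> 2 * pi * T * S2 / 2"
      using assms(2,5) unfolding B_def content_Pair S2_def by simp
  qed (use int4 L4 in \<open>simp_all add: B_def g_def\<close>)
  moreover have "(2 * pi * T * S2)\<^sup>2 / (4 * (8 * pi\<^sup>2 * M * S2\<^sup>2)) = T\<^sup>2 / (8 * M)"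
    using assms(4) unfolding S2_def by (simp add: field_simps power2_eq_square)
  ultimately show ?thesis
    by (simp add: B_def g_def)
qed

lemma schrod_delta_superlevel_emeasure_ge:
  fixes M :: nat
  assumes "admissible_cutoff \<phi>" "0 < N" "0 < T" "T \<le> 2 * pi * M"
  shows "ennreal (T\<^sup>2 / (8 * M)) \<le> emeasure lborel {(t, x). t \<in> {0..T} \<and> x \<in> {0..2 * pi} \<and>
    cmod (schrod_delta \<phi> N t x) \<ge> 1 / (3 * pi) * sqrt N}"
proof -
  define A where "A = (\<Sum>n\<in>freq_window N. (\<phi> (of_int n / N))\<^sup>2)"
  define c where "c = (\<lambda>n. \<phi> (of_int n / N) / (2 * pi))"
  have "N \<le> A"
    unfolding A_def using assms(1,2) by (rule admissible_cutoff_energy_ge)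
  have "(\<Sum>n\<in>freq_window N. (c n)\<^sup>2) = A / (4 * pi\<^sup>2)"
    unfolding A_def c_def by (simp add: power_divide sum_divide_distrib power_mult_distrib)
  moreover have "(1 / (3 * pi) * sqrt N)\<^sup>2 \<le> A / (4 * pi\<^sup>2) / 2"
    using \<open>N \<le> A\<close> assms(2) by (simp add: power_mult_distrib power_divide field_simps)
  ultimately have "ennreal (T\<^sup>2 / (8 * M)) \<le> emeasure lborel {p \<in> cbox (0, 0) (T, 2 * pi).
      1 / (3 * pi) * sqrt N \<le> cmod (schrodinger_wave (freq_window N) c (fst p) (snd p))}"
    using assms(2,3,4) \<open>N \<le> A\<close>
    by (intro schrodinger_wave_superlevel_emeasure_ge) (simp_all add: freq_window_def)
  also have "{p \<in> cbox (0, 0) (T, 2 * pi).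
      1 / (3 * pi) * sqrt N \<le> cmod (schrodinger_wave (freq_window N) c (fst p) (snd p))} =
    {(t, x). t \<in> {0..T} \<and> x \<in> {0..2 * pi} \<and> cmod (schrod_delta \<phi> N t x) \<ge> 1 / (3 * pi) * sqrt N}"
    by (auto simp: cbox_Pair_eq schrod_delta_eq_schrodinger_wave[OF assms(1,2)] c_def)
  finally show ?thesis .
qed

theorem corollary6p3:
  fixes \<phi> :: "real \<Rightarrow> real"
  assumes "admissible_cutoff \<phi>"
  shows "\<forall>T>0. \<exists>\<epsilon>>0. \<exists>c>0. \<forall>k::nat.
    emeasure lborel {(t::real, x::real). t \<in> {0..T} \<and> x \<in> {0..2*pi} \<and>
        cmod (schrod_delta \<phi> (2 ^ k) t x) \<ge> \<epsilon> * sqrt (2 ^ k)} \<ge> ennreal c"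
proof (intro allI impI)
  fix T :: real
  assume "T > 0"
  define M where "M = nat \<lceil>T / (2 * pi)\<rceil>"
  have "T / (2 * pi) \<le> M"
    unfolding M_def by linarith
  then have "T \<le> 2 * pi * M"
    by (simp add: field_simps)
  then have "M > 0"
    using \<open>T > 0\<close> by (intro Nat.gr0I) simp
  have "\<forall>k::nat. emeasure lborel {(t, x). t \<in> {0..T} \<and> x \<in> {0..2 * pi} \<and>
      cmod (schrod_delta \<phi> (2 ^ k) t x) \<ge> 1 / (3 * pi) * sqrt (2 ^ k)} \<ge> ennreal (T\<^sup>2 / (8 * M))"
    using schrod_delta_superlevel_emeasure_ge[OF assms _ \<open>T > 0\<close> \<open>T \<le> 2 * pi * M\<close>] by simp
  moreover have "1 / (3 * pi) > 0" "T\<^sup>2 / (8 * M) > 0"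
    using \<open>T > 0\<close> \<open>M > 0\<close> by simp_all
  ultimately show "\<exists>\<epsilon>>0. \<exists>c>0. \<forall>k::nat. emeasure lborel {(t, x). t \<in> {0..T} \<and> x \<in> {0..2 * pi} \<and>
      cmod (schrod_delta \<phi> (2 ^ k) t x) \<ge> \<epsilon> * sqrt (2 ^ k)} \<ge> ennreal c"
    by blast
qed

end
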